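(* Let $(F_n)_{n\ge1}$ be the Fibonacci sequence ($F_1=F_2=1$, $F_{n+2}=F_{n+1}+F_n$). For a positive integer $n$ let $g(n):=\gcd(n,F_n)$, let $z(n)$ be the smallest positive integer $k$ such that $n\mid F_k$, and let $\ell(n):=\operatorname{lcm}(n,z(n))$. Let $\mathcal{A}:=\{g(n): n\ge1\}$. Then for all positive integers $m,n$ and all primes $p$: (i) if $m\mid n$ then $g(m)\mid g(n)$; (ii) $n\mid g(m)$ if and only if $\ell(n)\mid m$; (iii) $n\in\mathcal{A}$ if and only if $n=g(\ell(n))$; (iv) if $\ell(p)\mid \ell(n)$ and $n\in\mathcal{A}$, then $p\mid n$; (v) $\ell(p)=p\,z(p)$ if $p\ne 5$, and $\ell(5)=5$; (vi) if $p\neq 3$ and $\ell(q)\nmid z(p)$ for all primes $q$, then $p\in\mathcal{A}$. *)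

theory Defs
  imports "HOL-Number_Theory.Number_Theory"
begin

definition fg :: "nat \<Rightarrow> nat" where
  "fg n = gcd n (fib n)"

definition fz :: "nat \<Rightarrow> nat" where
  "fz n = (LEAST k. 0 < k \<and> n dvd fib k)"

definition fl :: "nat \<Rightarrow> nat" where
  "fl n = lcm n (fz n)"

definition fA :: "nat set" where
  "fA = {fg n | n. n \<ge> 1}"

end

theory Submission
  imports Defs
begin

text \<open>The rank of apparition \<open>z(n)\<close> exists because Fibonacci numbers are periodic modulo
  \<open>n\<close>, and \<open>n | F\<^sub>k \<longleftrightarrow> z(n) | k\<close> because \<open>gcd(F\<^sub>a, F\<^sub>b) = F\<^sub>g\<^sub>c\<^sub>d\<^sub>(\<^sub>a\<^sub>,\<^sub>b\<^sub>)\<close>.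
  Hence \<open>n | g(m)\<close> iff \<open>n | m\<close> and \<open>z(n) | m\<close>, i.e. iff \<open>\<ell>(n) | m\<close>; parts (i)-(iv) are
  formal consequences of this Galois-type correspondence.
  For a prime \<open>p \<noteq> 5\<close>, the binomial expansion of \<open>(1 + \<surd>5)\<^sup>p\<close> gives
  \<open>F\<^sub>p \<equiv> 5\<^sup>(\<^sup>p\<^sup>-\<^sup>1\<^sup>)\<^sup>/\<^sup>2\<close>, so \<open>p | F\<^sub>p\<^sub>-\<^sub>1 F\<^sub>p\<^sub>+\<^sub>1\<close>; thus \<open>z(p) \<le> p + 1\<close> and \<open>p \<nmid> z(p)\<close>,
  which is (v). For (vi), \<open>p | g(\<ell>(p))\<close>, and any further prime factor \<open>q\<close> of \<open>g(\<ell>(p))\<close>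
  would satisfy \<open>\<ell>(q) | z(p)\<close>, so \<open>g(\<ell>(p)) = p\<close>.\<close>

section \<open>The rank of apparition\<close>

definition fib_pair_mod :: "nat \<Rightarrow> nat \<Rightarrow> nat \<times> nat" where
  "fib_pair_mod n k = (fib k mod n, fib (Suc k) mod n)"

lemma fib_pair_mod_Suc_cancel:
  assumes "fib_pair_mod n (Suc a) = fib_pair_mod n (Suc b)"
  shows "fib_pair_mod n a = fib_pair_mod n b"
proof -
  have Suc: "[fib (Suc a) = fib (Suc b)] (mod n)"
    and SSuc: "[fib (Suc a) + fib a = fib (Suc b) + fib b] (mod n)"
    using assms by (simp_all add: fib_pair_mod_def cong_def)
  have "[fib (Suc b) + fib a = fib (Suc b) + fib b] (mod n)"
    using SSuc cong_add_rcancel_nat[of _ "fib a", THEN iffD2, OF Suc]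
    by (meson cong_sym cong_trans)
  then have "[fib a = fib b] (mod n)"
    by (rule cong_add_lcancel_nat[THEN iffD1])
  with Suc show ?thesis
    by (simp add: fib_pair_mod_def cong_def)
qed

lemma fib_pair_mod_add_cancel:
  "fib_pair_mod n (a + t) = fib_pair_mod n (b + t) \<Longrightarrow> fib_pair_mod n a = fib_pair_mod n b"
  by (induction t) (auto dest: fib_pair_mod_Suc_cancel)

text \<open>Fibonacci numbers are periodic modulo \<open>n\<close>: by pigeonhole two of the pairs
  \<open>(F\<^sub>k, F\<^sub>k\<^sub>+\<^sub>1) mod n\<close>, \<open>k \<le> n\<^sup>2\<close>, coincide, and running the
  recurrence backwards moves the coincidence down to \<open>k = 0\<close>.\<close>

lemma ex_dvd_fib:
  assumes "0 < n"
  shows "\<exists>k>0. n dvd fib k"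
proof -
  have "fib_pair_mod n ` {0..n * n} \<subseteq> {0..<n} \<times> {0..<n}"
    using assms by (auto simp: fib_pair_mod_def)
  then have "card (fib_pair_mod n ` {0..n * n}) \<le> n * n"
    by (metis card_atLeastLessThan card_cartesian_product card_mono finite_SigmaI
        finite_atLeastLessThan minus_nat.diff_0)
  then have "\<not> inj_on (fib_pair_mod n) {0..n * n}"
    by (intro pigeonhole) simp
  then obtain a b where "a < b" "fib_pair_mod n a = fib_pair_mod n b"
    unfolding inj_on_def by (metis linorder_neqE_nat)
  then have "fib_pair_mod n 0 = fib_pair_mod n (b - a)"
    using fib_pair_mod_add_cancel[of n 0 a "b - a"] by simp
  then have "n dvd fib (b - a)"
    by (simp add: fib_pair_mod_def dvd_eq_mod_eq_0)
  with \<open>a < b\<close> show ?thesis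
    by (intro exI[of _ "b - a"]) simp
qed

lemma fz_pos_dvd_fib:
  assumes "0 < n"
  shows "0 < fz n" and "n dvd fib (fz n)"
proof -
  obtain k where "0 < k \<and> n dvd fib k"
    using ex_dvd_fib[OF assms] by blast
  then have "0 < fz n \<and> n dvd fib (fz n)"
    unfolding fz_def by (rule LeastI)
  then show "0 < fz n" and "n dvd fib (fz n)"
    by auto
qed

lemma fz_le: "0 < k \<Longrightarrow> n dvd fib k \<Longrightarrow> fz n \<le> k"
  unfolding fz_def by (rule Least_le) simp

lemma fib_dvd_fib: "m dvd n \<Longrightarrow> fib m dvd fib n"
  by (metis fib_gcd gcd_dvd2 gcd_nat.absorb1)

text \<open>By \<open>gcd(F\<^sub>a, F\<^sub>b) = F\<^sub>g\<^sub>c\<^sub>d\<^sub>(\<^sub>a\<^sub>,\<^sub>b\<^sub>)\<close>, the indices \<open>k\<close> with \<open>n | F\<^sub>k\<close>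
  are closed under \<open>gcd\<close>, so the least positive one divides all of them.\<close>

lemma dvd_fib_iff_fz_dvd:
  assumes "0 < n"
  shows "n dvd fib k \<longleftrightarrow> fz n dvd k"
proof
  assume "n dvd fib k"
  then have "n dvd fib (gcd k (fz n))"
    using fz_pos_dvd_fib[OF assms] by (simp add: fib_gcd)
  moreover have "0 < gcd k (fz n)"
    using fz_pos_dvd_fib(1)[OF assms] by simp
  ultimately have "fz n \<le> gcd k (fz n)"
    by (rule fz_le[rotated])
  then have "gcd k (fz n) = fz n"
    using fz_pos_dvd_fib(1)[OF assms] by (simp add: le_antisym gcd_le2_nat)
  then show "fz n dvd k"
    by (metis gcd_dvd1)
next
  assume "fz n dvd k"
  then show "n dvd fib k"
    using fib_dvd_fib fz_pos_dvd_fib(2)[OF assms] dvd_trans by blast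
qed

lemma fl_pos: "0 < n \<Longrightarrow> 0 < fl n"
  unfolding fl_def using fz_pos_dvd_fib(1) by (simp add: lcm_pos_nat)

section \<open>Fibonacci numbers modulo a prime\<close>

text \<open>Expanding \<open>(1 + \<surd>5)\<^sup>n = lucas_binom n + fib_binom n \<cdot> \<surd>5\<close> binomially; Binet's
  formula then gives \<open>2\<^sup>n\<^sup>-\<^sup>1 F\<^sub>n = fib_binom n\<close>.\<close>

definition fib_binom :: "nat \<Rightarrow> nat" where
  "fib_binom n = (\<Sum>k\<le>n. (n choose k) * (if odd k then 5 ^ (k div 2) else 0))"

definition lucas_binom :: "nat \<Rightarrow> nat" where
  "lucas_binom n = (\<Sum>k\<le>n. (n choose k) * (if even k then 5 ^ (k div 2) else 0))"

lemma sum_Suc_choose: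
  "(\<Sum>k\<le>Suc n. (Suc n choose k) * c k) =
     (\<Sum>k\<le>n. (n choose k) * c k) + (\<Sum>k\<le>n. (n choose k) * c (Suc k))"
proof -
  have "(\<Sum>k\<le>Suc n. (Suc n choose k) * c k) =
      c 0 + (\<Sum>k\<le>n. (n choose Suc k) * c (Suc k)) + (\<Sum>k\<le>n. (n choose k) * c (Suc k))"
    unfolding sum.atMost_Suc_shift by (simp add: sum.distrib algebra_simps)
  also have "c 0 + (\<Sum>k\<le>n. (n choose Suc k) * c (Suc k)) = (\<Sum>k\<le>n. (n choose k) * c k)"
    using sum.atMost_Suc_shift[of "\<lambda>k. (n choose k) * c k" n] by (simp add: binomial_eq_0)
  finally show ?thesis .
qed

lemma fib_binom_Suc: "fib_binom (Suc n) = fib_binom n + lucas_binom n"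
  unfolding fib_binom_def lucas_binom_def
  by (subst sum_Suc_choose) (auto intro!: sum.cong)

lemma lucas_binom_Suc: "lucas_binom (Suc n) = lucas_binom n + 5 * fib_binom n"
  unfolding fib_binom_def lucas_binom_def
  by (subst sum_Suc_choose) (auto simp: sum_distrib_left intro!: sum.cong elim: oddE)

lemma two_fib_binom: "2 * fib_binom n = 2 ^ n * fib n"
proof -
  have rec: "fib_binom (Suc (Suc n)) = 2 * fib_binom (Suc n) + 4 * fib_binom n" for n
    using fib_binom_Suc[of "Suc n"] lucas_binom_Suc[of n] fib_binom_Suc[of n] by simp
  have "2 * fib_binom n = 2 ^ n * fib n \<and> 2 * fib_binom (Suc n) = 2 ^ Suc n * fib (Suc n)"
  proof (induction n)
    case 0
    then show ?case by (simp add: fib_binom_def)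
  next
    case (Suc n)
    then show ?case by (simp add: rec algebra_simps)
  qed
  then show ?thesis ..
qed

lemma sum_prime_choose_cong:
  fixes p :: nat
  assumes "prime p"
  shows "[(\<Sum>k\<le>p. (p choose k) * c k) = c 0 + c p] (mod p)"
proof -
  have p: "1 < p"
    using assms prime_gt_1_nat by blast
  have "{..p} = insert 0 (insert p {1..<p})"
    using p by auto
  then have "(\<Sum>k\<le>p. (p choose k) * c k) = c 0 + c p + (\<Sum>k\<in>{1..<p}. (p choose k) * c k)"
    using p by simp
  moreover have "p dvd (\<Sum>k\<in>{1..<p}. (p choose k) * c k)"
    using assms p by (auto intro!: dvd_sum dvd_mult2 dvd_choose_prime)
  ultimately show ?thesis
    by (simp add: cong_def mod_add_right_eq[symmetric, of "c 0 + c p"] dvd_eq_mod_eq_0)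
qed

lemma prime_fib_cong:
  fixes p :: nat
  assumes "prime p" and "odd p"
  shows "[fib p = 5 ^ (p div 2)] (mod p)"
proof -
  have "\<not> p dvd 2"
    using assms primes_dvd_imp_eq[OF assms(1) two_is_prime_nat] by (metis even_numeral)
  then have "[1 * fib p = 2 ^ (p - 1) * fib p] (mod p)"
    by (intro cong_scalar_right cong_sym[OF fermat_theorem[OF assms(1)]])
  also have "2 ^ (p - 1) * fib p = fib_binom p"
    using two_fib_binom[of p] prime_gt_0_nat[OF assms(1)] by (cases p) simp_all
  also have "[fib_binom p = 5 ^ (p div 2)] (mod p)"
    using sum_prime_choose_cong[OF assms(1), of "\<lambda>k. if odd k then 5 ^ (k div 2) else 0"] assms(2)
    by (simp add: fib_binom_def)
  finally show ?thesis
    by simp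
qed

text \<open>Squaring gives \<open>F\<^sub>p\<^sup>2 \<equiv> 5\<^sup>p\<^sup>-\<^sup>1 \<equiv> 1\<close>, and Cassini's identity turns
  \<open>F\<^sub>p\<^sup>2 - 1\<close> into \<open>F\<^sub>p\<^sub>-\<^sub>1 F\<^sub>p\<^sub>+\<^sub>1\<close>.\<close>

lemma prime_dvd_fib_pred_or_Suc:
  fixes p :: nat
  assumes "prime p" and "p \<noteq> 5"
  shows "p dvd fib (p - 1) \<or> p dvd fib (p + 1)"
proof (cases "p = 2")
  case True
  then show ?thesis
    by (simp add: numeral_eq_Suc)
next
  case False
  then have "odd p"
    using prime_odd_nat[OF assms(1)] prime_ge_2_nat[OF assms(1)] by simp
  have "prime (5::nat)"
    by code_simp
  then have "\<not> p dvd 5"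
    using primes_dvd_imp_eq[OF assms(1)] assms(2) by blast
  have "p - 1 = p div 2 * 2"
    using \<open>odd p\<close> by presburger
  have "[fib p ^ 2 = (5 ^ (p div 2)) ^ 2] (mod p)"
    using prime_fib_cong[OF assms(1) \<open>odd p\<close>] by (rule cong_pow)
  also have "(5 ^ (p div 2)) ^ 2 = (5::nat) ^ (p - 1)"
    by (simp only: \<open>p - 1 = p div 2 * 2\<close> power_mult)
  also have "[\<dots> = 1] (mod p)"
    using fermat_theorem[OF assms(1) \<open>\<not> p dvd 5\<close>] .
  finally have "p dvd fib p ^ 2 - 1"
    by (rule cong_to_1_nat)
  moreover have "fib (p + 1) * fib (p - 1) = fib p ^ 2 - 1"
    using fib_Cassini_nat[of "p - 1"] \<open>odd p\<close> prime_gt_0_nat[OF assms(1)] by simp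
  ultimately have "p dvd fib (p + 1) * fib (p - 1)"
    by simp
  then show ?thesis
    using prime_dvd_mult_nat[OF assms(1)] by blast
qed

lemma fz_5: "fz 5 = 5"
  unfolding fz_def
proof (rule Least_equality)
  show "0 < (5::nat) \<and> 5 dvd fib 5"
    by (simp add: numeral_eq_Suc)
next
  fix k :: nat
  assume "0 < k \<and> 5 dvd fib k"
  moreover have "fib 1 = 1" "fib 2 = 1" "fib 3 = 2" "fib 4 = 3"
    by (simp_all add: numeral_eq_Suc)
  moreover have "k < 5 \<Longrightarrow> k = 0 \<or> k = 1 \<or> k = 2 \<or> k = 3 \<or> k = 4"
    by auto
  ultimately show "5 \<le> k"
    by (cases "k < 5") auto
qed

lemma fz_prime_le: "prime q \<Longrightarrow> fz q \<le> q + 1"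
proof (cases "q = 5")
  case False
  assume "prime q"
  then show ?thesis
    using prime_dvd_fib_pred_or_Suc[OF \<open>prime q\<close> False] fz_le[of "q - 1" q] fz_le[of "q + 1" q]
      prime_ge_2_nat[of q] by force
qed (simp add: fz_5)

lemma prime_not_dvd_fz:
  assumes "prime p" and "p \<noteq> 5"
  shows "\<not> p dvd fz p"
proof
  assume "p dvd fz p"
  have "0 < p - 1" and "0 < p"
    using prime_ge_2_nat[OF assms(1)] by simp_all
  from prime_dvd_fib_pred_or_Suc[OF assms] \<open>0 < p\<close>
  have "fz p dvd p - 1 \<or> fz p dvd p + 1"
    by (simp add: dvd_fib_iff_fz_dvd)
  with \<open>p dvd fz p\<close> have "p dvd p - 1 \<or> p dvd 1"
    using dvd_trans dvd_add_right_iff[of p p 1] by auto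
  then show False
    using \<open>0 < p - 1\<close> prime_ge_2_nat[OF assms(1)] by (auto dest: dvd_imp_le)
qed

lemma fl_prime: "prime p \<Longrightarrow> p \<noteq> 5 \<Longrightarrow> fl p = p * fz p"
  unfolding fl_def using prime_not_dvd_fz by (simp add: lcm_coprime prime_imp_coprime_nat)

lemma fl_5: "fl 5 = 5"
  by (simp add: fl_def fz_5)

lemma fg_dvd_fg: "m dvd n \<Longrightarrow> fg m dvd fg n"
  unfolding fg_def by (meson dvd_trans fib_dvd_fib gcd_dvd1 gcd_dvd2 gcd_greatest)

lemma dvd_fg_iff_fl_dvd: "0 < n \<Longrightarrow> n dvd fg m \<longleftrightarrow> fl n dvd m"
  unfolding fg_def fl_def using dvd_fib_iff_fz_dvd by auto

lemma fA_iff_eq_fg_fl: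
  assumes "0 < n"
  shows "n \<in> fA \<longleftrightarrow> n = fg (fl n)"
proof
  assume "n \<in> fA"
  then obtain m where "n = fg m"
    unfolding fA_def by blast
  then have "fl n dvd m"
    using dvd_fg_iff_fl_dvd[OF assms, of m] by simp
  then have "fg (fl n) dvd n"
    unfolding \<open>n = fg m\<close> by (rule fg_dvd_fg)
  moreover have "n dvd fg (fl n)"
    using dvd_fg_iff_fl_dvd[OF assms] by simp
  ultimately show "n = fg (fl n)"
    by (simp add: dvd_antisym)
next
  assume "n = fg (fl n)"
  then show "n \<in> fA"
    unfolding fA_def using fl_pos[OF assms] by (intro CollectI exI[of _ "fl n"]) auto
qed

lemma prime_dvd_if_fl_dvd_fl:
  assumes "prime p" and "0 < n" and "fl p dvd fl n" and "n \<in> fA"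
  shows "p dvd n"
proof -
  have "p dvd fg (fl p)"
    using dvd_fg_iff_fl_dvd prime_gt_0_nat[OF assms(1)] by simp
  also have "fg (fl p) dvd fg (fl n)"
    using fg_dvd_fg assms(3) .
  also have "fg (fl n) = n"
    using fA_iff_eq_fg_fl[OF assms(2)] assms(4) by simp
  finally show ?thesis .
qed

lemma primes_adjacent:
  fixes p q :: nat
  assumes "prime p" and "prime q" and "p \<noteq> q" and "p \<le> q + 1" and "q \<le> p + 1"
  shows "p + q = 5"
proof -
  have even_prime: "prime r \<Longrightarrow> even r \<Longrightarrow> r = 2" for r :: nat
    using prime_odd_nat[of r] prime_ge_2_nat[of r] by fastforce
  have "q = p + 1 \<or> p = q + 1"
    using assms(3-5) by linarith
  then have "even p \<or> even q"
    by auto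
  then have "p = 2 \<or> q = 2"
    using even_prime assms(1,2) by blast
  moreover have "\<not> prime (1::nat)"
    by simp
  ultimately show ?thesis
    using \<open>q = p + 1 \<or> p = q + 1\<close> assms(1,2) by auto
qed

text \<open>A prime \<open>q\<close> dividing \<open>g(\<ell>(p)) / p\<close> must divide
  \<open>z(p)\<close>, and then so does \<open>z(q)\<close>, unless \<open>p | z(q)\<close>; the latter is impossible since
  \<open>z(q) \<le> q + 1\<close> and \<open>q \<le> z(p) \<le> p + 1\<close> would make \<open>p\<close> and \<open>q\<close> adjacent primes.\<close>

lemma fl_dvd_fz_if_mult_dvd_fg_fl:
  assumes "prime p" and "p \<notin> {2, 3, 5}" and "prime q" and "p * q dvd fg (fl p)"
  shows "fl q dvd fz p"
proof -
  define z where "z = fz p"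
  have "0 < p" and "0 < q" and "0 < z"
    using assms(1,3) fz_pos_dvd_fib(1) prime_gt_0_nat by (simp_all add: z_def)
  have fl_p: "fl p = p * z"
    using fl_prime assms(1,2) by (simp add: z_def)
  have "\<not> p dvd z"
    using prime_not_dvd_fz assms(1,2) by (simp add: z_def)
  have "p * q dvd p * z" and "q dvd fib (p * z)"
    using assms(4) dvd_trans[of q "p * q"] by (auto simp: fg_def fl_p)
  then have "q dvd z" and "fz q dvd p * z"
    using \<open>0 < p\<close> dvd_fib_iff_fz_dvd[OF \<open>0 < q\<close>] by auto
  have "\<not> p dvd fz q"
  proof
    assume "p dvd fz q"
    then have "p \<le> fz q"
      using fz_pos_dvd_fib(1)[OF \<open>0 < q\<close>] by (rule dvd_imp_le)
    then have "p \<le> q + 1"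
      using fz_prime_le[OF assms(3)] by linarith
    moreover have "q \<le> p + 1"
      using dvd_imp_le[OF \<open>q dvd z\<close> \<open>0 < z\<close>] fz_prime_le[OF assms(1)] by (simp add: z_def)
    moreover have "p \<noteq> q"
      using \<open>q dvd z\<close> \<open>\<not> p dvd z\<close> by blast
    ultimately have "p + q = 5"
      using primes_adjacent assms(1,3) by blast
    then show False
      using assms(2) prime_ge_2_nat[OF assms(1)] prime_ge_2_nat[OF assms(3)] by auto
  qed
  then have "coprime (fz q) p"
    using prime_imp_coprime[OF assms(1)] coprime_commute by blast
  then have "fz q dvd z"
    using \<open>fz q dvd p * z\<close> by (simp add: coprime_dvd_mult_right_iff)
  with \<open>q dvd z\<close> show ?thesis
    by (simp add: fl_def z_def)
qed

lemma prime_mem_fA: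
  assumes "prime p" and "p \<noteq> 3" and no_fl: "\<forall>q. prime q \<longrightarrow> \<not> fl q dvd fz p"
  shows "p \<in> fA"
proof -
  consider "p = 2" | "p = 5" | "p \<notin> {2, 3, 5}"
    using assms(2) by blast
  then show ?thesis
  proof cases
    case 1
    have "fg 6 = 2"
      unfolding fg_def by code_simp
    then show ?thesis
      unfolding fA_def 1 by (intro CollectI exI[of _ 6]) auto
  next
    case 2
    have "fg 5 = 5"
      by (simp add: fg_def numeral_eq_Suc)
    then show ?thesis
      unfolding fA_def 2 by (intro CollectI exI[of _ 5]) auto
  next
    case 3
    have "0 < p"
      using prime_gt_0_nat[OF assms(1)] .
    then have "p dvd fg (fl p)"
      using dvd_fg_iff_fl_dvd by simp
    then obtain e where e: "fg (fl p) = p * e"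
      by (rule dvdE)
    have "e = 1"
    proof (rule ccontr)
      assume "e \<noteq> 1"
      then obtain q where "prime q" and "q dvd e"
        using prime_factor_nat by blast
      then have "p * q dvd fg (fl p)"
        unfolding e by simp
      then have "fl q dvd fz p"
        using fl_dvd_fz_if_mult_dvd_fg_fl assms(1) 3 \<open>prime q\<close> by blast
      then show False
        using no_fl \<open>prime q\<close> by blast
    qed
    then show ?thesis
      using fA_iff_eq_fg_fl[OF \<open>0 < p\<close>] e by simp
  qed
qed

theorem lemma2p2:
  fixes m n p :: nat
  assumes "0 < m" and "0 < n" and "prime p"
  shows "(m dvd n \<longrightarrow> fg m dvd fg n)
       \<and> (n dvd fg m \<longleftrightarrow> fl n dvd m)
       \<and> (n \<in> fA \<longleftrightarrow> n = fg (fl n))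
       \<and> (fl p dvd fl n \<and> n \<in> fA \<longrightarrow> p dvd n)
       \<and> (p \<noteq> 5 \<longrightarrow> fl p = p * fz p)
       \<and> fl 5 = 5
       \<and> (p \<noteq> 3 \<and> (\<forall>q::nat. prime q \<longrightarrow> \<not> fl q dvd fz p) \<longrightarrow> p \<in> fA)"
  using fg_dvd_fg dvd_fg_iff_fl_dvd[OF assms(2)] fA_iff_eq_fg_fl[OF assms(2)]
    prime_dvd_if_fl_dvd_fl[OF assms(3,2)] fl_prime[OF assms(3)] fl_5 prime_mem_fA[OF assms(3)]
  by blast

end
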